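(* Let $n,d$ be positive integers and let $X = H Z$, where $H\in\mathbb{R}^{d\times n}$ is an unknown matrix of full column rank and $Z=(Z_1,\dots,Z_n)^\top$ is an unobserved random vector generated by the structural equations $Z_i = f_i(Z_{pa(i)}) + \mathcal{E}_i$, $i\in[n]$, with respect to an unknown directed acyclic graph $\mathcal{G}$ on $[n]$, where each $f_i$ is twice continuously differentiable and directionally non-linear, and $\mathcal{E}_1,\dots,\mathcal{E}_n$ are mutually independent with $\mathcal{E}_i\sim\mathcal{N}(0,\sigma_i^2)$. Then the latent variables $Z$ are identifiable up to upstream layers from the distribution $p_X$ of $X$ alone: it is possible to learn from $p_X$ a map $\hat Z:\mathbb{R}^d\to\mathbb{R}^n$ such that $\hat Z(X) = P_\pi\, C\, Z$ for all $Z\in\mathbb{R}^n$, where $P_\pi\in\mathbb{R}^{n\times n}$ is a permutation matrix and $C\in\mathbb{R}^{n\times n}$ is a constant matrix with non-zero diagonal entries and $C_{ij}=0$ whenever $i\in layer(k)$ and $j\in\bigcup_{l<k} layer(l)$.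
   Context: $pa(i)$ denotes the set of parents of node $i$ in $\mathcal{G}$ and $Z_{pa(i)}$ the corresponding subvector. A function $f_i:\mathbb{R}^{|pa(i)|}\to\mathbb{R}$ is directionally non-linear if there is no $\beta\in\mathbb{R}^{|pa(i)|}$ with $\|\beta\|_2=1$ such that the second directional derivative $\partial^2_{\beta,\beta} f_i(z)=0$ for all $z$. A leaf node is a node with no descendants in $\mathcal{G}$. For $k\ge 0$, $layer(k)$ is the set of nodes of $\mathcal{G}$ whose longest directed path to a leaf node has length $k$ (so $layer(0)$ is the set of leaves). Only samples of $X$ (equivalently, the distribution $p_X$) are available; no interventions. *)

theory Defs
  imports "HOL-Analysis.Analysis" "HOL-Probability.Probability"
begin

text \<open>Directed graphs on the index type 'n: an edge (j,i) means j \<rightarrow> i.\<close>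

definition parents :: "('n \<times> 'n) set \<Rightarrow> 'n \<Rightarrow> 'n set" where
  "parents G i = {j. (j, i) \<in> G}"

definition is_leaf :: "('n \<times> 'n) set \<Rightarrow> 'n \<Rightarrow> bool" where
  "is_leaf G v \<longleftrightarrow> (\<forall>w. (v, w) \<notin> G)"

definition path_to_leaf :: "('n \<times> 'n) set \<Rightarrow> 'n \<Rightarrow> nat \<Rightarrow> bool" where
  "path_to_leaf G i k \<longleftrightarrow>
     (\<exists>p :: nat \<Rightarrow> 'n. p 0 = i \<and> (\<forall>m<k. (p m, p (Suc m)) \<in> G) \<and> is_leaf G (p k))"

definition layer :: "('n \<times> 'n) set \<Rightarrow> nat \<Rightarrow> 'n set" where
  "layer G k = {i. path_to_leaf G i k \<and> (\<forall>m. path_to_leaf G i m \<longrightarrow> m \<le> k)}"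

definition depends_only_on :: "(real^'n \<Rightarrow> real) \<Rightarrow> 'n set \<Rightarrow> bool" where
  "depends_only_on g S \<longleftrightarrow> (\<forall>z z'. (\<forall>j\<in>S. z $ j = z' $ j) \<longrightarrow> g z = g z')"

definition C2 :: "(real^'n \<Rightarrow> real) \<Rightarrow> bool" where
  "C2 g \<longleftrightarrow> (\<exists>(Dg :: (real^'n) \<Rightarrow> ((real^'n) \<Rightarrow>\<^sub>L real))
                 (D2g :: (real^'n) \<Rightarrow> ((real^'n) \<Rightarrow>\<^sub>L ((real^'n) \<Rightarrow>\<^sub>L real))).
      (\<forall>z. (g has_derivative blinfun_apply (Dg z)) (at z)) \<and>
      (\<forall>z. (Dg has_derivative blinfun_apply (D2g z)) (at z)) \<and>
      continuous_on UNIV D2g)"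

definition dir2 :: "(real^'n \<Rightarrow> real) \<Rightarrow> real^'n \<Rightarrow> real^'n \<Rightarrow> real" where
  "dir2 g \<beta> z = deriv (\<lambda>t. deriv (\<lambda>s. g (z + s *\<^sub>R \<beta>)) t) 0"

text \<open>Directional non-linearity of f_i viewed as a function of Z_{pa(i)}:
  directions \<beta> live in R^{|pa(i)|}, i.e. are supported on the parent coordinates.\<close>
definition dir_nonlinear :: "(real^'n \<Rightarrow> real) \<Rightarrow> 'n set \<Rightarrow> bool" where
  "dir_nonlinear g S \<longleftrightarrow>
     \<not> (\<exists>\<beta>. norm \<beta> = 1 \<and> (\<forall>j. j \<notin> S \<longrightarrow> \<beta> $ j = 0) \<and> (\<forall>z. dir2 g \<beta> z = 0))"

definition sem_solve :: "('n \<Rightarrow> real^'n \<Rightarrow> real) \<Rightarrow> real^'n \<Rightarrow> real^'n" where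
  "sem_solve f e = (THE z. \<forall>i. z $ i = f i z + e $ i)"

definition noise_measure :: "('n::finite \<Rightarrow> real) \<Rightarrow> (real^'n) measure" where
  "noise_measure \<sigma> = density lborel (\<lambda>e. \<Prod>i\<in>UNIV. ennreal (normal_density 0 (\<sigma> i) (e $ i)))"

definition obs_dist :: "real^'n^'d \<Rightarrow> ('n::finite \<Rightarrow> real^'n \<Rightarrow> real) \<Rightarrow> ('n \<Rightarrow> real)
     \<Rightarrow> (real^'d) measure" where
  "obs_dist H f \<sigma> = distr (noise_measure \<sigma>) borel (\<lambda>e. H *v sem_solve f e)"

definition valid_model :: "real^'n^'d \<Rightarrow> ('n::finite \<times> 'n) set \<Rightarrow> ('n \<Rightarrow> real^'n \<Rightarrow> real)
     \<Rightarrow> ('n \<Rightarrow> real) \<Rightarrow> bool" where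
  "valid_model H G f \<sigma> \<longleftrightarrow>
     rank H = CARD('n) \<and> acyclic G \<and>
     (\<forall>i. depends_only_on (f i) (parents G i) \<and> C2 (f i) \<and> dir_nonlinear (f i) (parents G i)) \<and>
     (\<forall>i. \<sigma> i > 0)"

definition perm_matrix :: "('n::finite \<Rightarrow> 'n) \<Rightarrow> real^'n^'n" where
  "perm_matrix \<pi> = (\<chi> i j. if j = \<pi> i then 1 else 0)"

end

theory Submission
  imports Defs
begin

text \<open>Let the true model have mixing matrix \<open>H'\<close> and latent vector \<open>Z'\<close>, and let \<open>(H, G, f, \<sigma>)\<close>
  be any valid model with the same observational distribution; the estimator applies a left
  inverse \<open>L\<close> of \<open>H\<close>, so it returns \<open>A Z'\<close> with \<open>A = L H'\<close>, and \<open>A Z'\<close> has the law of the latent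
  vector \<open>Z\<close> of that model. Since this law has a positive density, \<open>A\<close> is invertible and the
  two latent densities differ by a linear change of variables.

  Let \<open>energy k\<close> be the part of \<open>- log p\<^sub>Z\<close> made of the noise terms of the nodes of height at
  least \<open>k\<close>. Because the noise is Gaussian and the mechanisms are directionally non-linear, the
  directions along which the second directional derivative of \<open>energy k\<close> is constant are exactly
  those supported on nodes of height at most \<open>k\<close>; and \<open>energy (Suc k)\<close> is the minimum of
  \<open>energy k\<close> along these directions. Both constructions commute with linear changes of variables,
  so by induction on \<open>k\<close> the matrix \<open>A\<close> and its inverse map low directions of one model onto
  those of the other. Hence an entry \<open>A\<^sub>m\<^sub>j\<close> can only be non-zero if the height of \<open>m\<close> in \<open>G\<close> is at
  most that of \<open>j\<close> in the true graph, and the inverse satisfies the opposite constraint. Comparing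
  the sums of heights along the permutations that survive in the expansions of the two
  determinants matches the nodes of the two graphs height by height, so \<open>A\<close> is a permuted matrix
  with non-zero diagonal whose entries \<open>C\<^sub>i\<^sub>j\<close> vanish when \<open>j\<close> lies in a lower layer than \<open>i\<close>.\<close>

section \<open>Heights in a finite acyclic graph\<close>

definition node_height :: "('n \<times> 'n) set \<Rightarrow> 'n \<Rightarrow> nat" where
  "node_height G i = (GREATEST k. path_to_leaf G i k)"

lemma walk_in_trancl:
  assumes "\<forall>m<k. (p m, p (Suc m)) \<in> G" "a < b" "b \<le> k"
  shows "(p a, p b) \<in> G\<^sup>+"
  using assms(2,3)
proof (induction b)
  case (Suc b)
  have "(p b, p (Suc b)) \<in> G" using assms(1) Suc.prems by auto
  then show ?case
    using Suc by (cases "a = b") (auto intro: trancl_into_trancl)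
qed simp

lemma walk_length_less_card:
  fixes G :: "('n::finite \<times> 'n) set"
  assumes "acyclic G" and walk: "\<forall>m<k. (p m, p (Suc m)) \<in> G"
  shows "k < CARD('n)"
proof (rule ccontr)
  assume "\<not> k < CARD('n)"
  then have "card (UNIV :: 'n set) < card {0..k}" by simp
  then have "\<not> inj_on p {0..k}"
    by (metis card_inj_on_le finite not_le subset_UNIV)
  then obtain a b where "a < b" "b \<le> k" "p a = p b"
    unfolding inj_on_def by (metis atLeastAtMost_iff linorder_neqE_nat)
  then show False
    using walk_in_trancl[OF walk] \<open>acyclic G\<close> unfolding acyclic_def by metis
qed

lemma path_to_leaf_Cons:
  assumes "(j, i) \<in> G" "path_to_leaf G i k"
  shows "path_to_leaf G j (Suc k)"
proof -
  obtain q where q: "q 0 = i" "\<forall>m<k. (q m, q (Suc m)) \<in> G" "is_leaf G (q k)"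
    using assms(2) unfolding path_to_leaf_def by blast
  let ?p = "\<lambda>m. if m = 0 then j else q (m - 1)"
  have "\<forall>m<Suc k. (?p m, ?p (Suc m)) \<in> G"
    using q assms(1) by (auto simp: less_Suc_eq_0_disj)
  then show ?thesis
    unfolding path_to_leaf_def using q by (intro exI[of _ ?p]) auto
qed

lemma path_to_leaf_exists:
  fixes G :: "('n::finite \<times> 'n) set"
  assumes "acyclic G"
  shows "\<exists>k. path_to_leaf G i k"
proof (induction i rule: wf_induct[OF finite_acyclic_wf_converse[OF finite assms]])
  case (1 i)
  show ?case
  proof (cases "is_leaf G i")
    case True
    then have "path_to_leaf G i 0" unfolding path_to_leaf_def by (intro exI[of _ "\<lambda>_. i"]) auto
    then show ?thesis ..
  next
    case False
    then obtain j where "(i, j) \<in> G" unfolding is_leaf_def by auto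
    with 1 show ?thesis by (blast intro: path_to_leaf_Cons)
  qed
qed

lemma
  fixes G :: "('n::finite \<times> 'n) set"
  assumes "acyclic G"
  shows path_to_leaf_node_height: "path_to_leaf G i (node_height G i)"
    and path_to_leaf_le_node_height: "path_to_leaf G i m \<Longrightarrow> m \<le> node_height G i"
proof -
  obtain k where "path_to_leaf G i k" using path_to_leaf_exists[OF assms] ..
  moreover have bound: "\<forall>m. path_to_leaf G i m \<longrightarrow> m \<le> CARD('n)"
    using walk_length_less_card[OF assms] unfolding path_to_leaf_def by (meson less_imp_le)
  ultimately show "path_to_leaf G i (node_height G i)"
    unfolding node_height_def by (metis GreatestI_nat)
  show "path_to_leaf G i m \<Longrightarrow> m \<le> node_height G i"
    unfolding node_height_def using bound by (metis Greatest_le_nat)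
qed

lemma layer_iff_node_height:
  fixes G :: "('n::finite \<times> 'n) set"
  assumes "acyclic G"
  shows "i \<in> layer G k \<longleftrightarrow> node_height G i = k"
  using path_to_leaf_node_height[OF assms] path_to_leaf_le_node_height[OF assms]
  unfolding layer_def by (auto intro: le_antisym)

lemma node_height_less_parent:
  fixes G :: "('n::finite \<times> 'n) set"
  assumes "acyclic G" "(j, i) \<in> G"
  shows "node_height G i < node_height G j"
  using path_to_leaf_le_node_height[OF assms(1) path_to_leaf_Cons[OF assms(2) path_to_leaf_node_height[OF assms(1)]]]
  by simp

lemma child_of_node_height_Suc:
  fixes G :: "('n::finite \<times> 'n) set"
  assumes ac: "acyclic G" and "node_height G j = Suc m"
  obtains i where "(j, i) \<in> G" "node_height G i = m"
proof -
  obtain p where p: "p 0 = j" "\<forall>k<Suc m. (p k, p (Suc k)) \<in> G" "is_leaf G (p (Suc m))"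
    using path_to_leaf_node_height[OF ac, of j] \<open>node_height G j = Suc m\<close> unfolding path_to_leaf_def by auto
  then have edge: "(j, p 1) \<in> G" by auto
  have "path_to_leaf G (p 1) m"
    unfolding path_to_leaf_def using p by (intro exI[of _ "\<lambda>k. p (Suc k)"]) auto
  then have "m \<le> node_height G (p 1)" by (rule path_to_leaf_le_node_height[OF ac])
  moreover have "node_height G (p 1) < Suc m"
    using node_height_less_parent[OF ac edge] \<open>node_height G j = Suc m\<close> by simp
  ultimately show ?thesis using edge that by simp
qed

section \<open>Determinants and rank-preserving permutations\<close>

lemma det_eq_1_if_ranked_unitriangular:
  fixes A :: "real^'n::finite^'n" and r :: "'n \<Rightarrow> nat"
  assumes diag: "\<And>i. A $ i $ i = 1"
    and off_diag: "\<And>i j. i \<noteq> j \<Longrightarrow> A $ i $ j \<noteq> 0 \<Longrightarrow> r i < r j"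
  shows "det A = 1"
proof -
  let ?term = "\<lambda>p. of_int (sign p) * (\<Prod>i\<in>UNIV. A $ i $ p i)"
  have zero: "?term p = 0" if p: "p \<in> {p. p permutes UNIV} - {id}" for p
  proof (rule ccontr)
    assume "?term p \<noteq> 0"
    then have nonzero: "A $ i $ p i \<noteq> 0" for i by (auto simp: prod_zero_iff)
    have le: "r i \<le> r (p i)" for i
      using off_diag[OF _ nonzero[of i]] by (metis less_imp_le order_refl)
    obtain i where "i \<noteq> p i" using p by (metis DiffE fun_eq_iff id_apply singletonI)
    then have "r i < r (p i)" using off_diag[OF _ nonzero] by blast
    then have "(\<Sum>i\<in>UNIV. r i) < (\<Sum>i\<in>UNIV. r (p i))"
      using le by (intro sum_strict_mono_ex1) auto
    moreover have "(\<Sum>i\<in>UNIV. r (p i)) = (\<Sum>i\<in>UNIV. r i)"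
      using p by (intro sum.reindex_bij_betw permutes_imp_bij) simp
    ultimately show False by simp
  qed
  have "(\<Sum>p\<in>{p. p permutes UNIV} - {id}. ?term p) = 0"
    using zero by (intro sum.neutral) blast
  moreover have "det A = ?term id + (\<Sum>p\<in>{p. p permutes UNIV} - {id}. ?term p)"
    unfolding det_def by (intro sum.remove) (simp_all add: permutes_id finite_permutations)
  ultimately show ?thesis by (simp add: diag)
qed

lemma det_reindex:
  fixes M :: "'a::comm_ring_1^'n::finite^'n" and h :: "'m::finite \<Rightarrow> 'n"
  assumes "bij h"
  shows "det (\<chi> i j. M $ h i $ h j) = det M"
  unfolding det_def
proof (rule sum.reindex_bij_witness[where i="\<lambda>q. inv h \<circ> q \<circ> h" and j="\<lambda>p. h \<circ> p \<circ> inv h"])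
  have conj_permutes: "g \<circ> p \<circ> inv g permutes UNIV" if "p permutes UNIV" "bij g" for p and g :: "'x \<Rightarrow> 'y"
    using that by (intro bij_imp_permutes) (auto intro: bij_comp bij_imp_bij_inv permutes_bij)
  have "bij (inv h)" using assms by (rule bij_imp_bij_inv)
  then show "q \<in> {q. q permutes UNIV} \<Longrightarrow> inv h \<circ> q \<circ> h \<in> {p. p permutes UNIV}" for q
    using conj_permutes[of q "inv h"] assms by (simp add: inv_inv_eq)
  show "p \<in> {p. p permutes UNIV} \<Longrightarrow> h \<circ> p \<circ> inv h \<in> {q. q permutes UNIV}" for p
    using conj_permutes assms by blast
  show "inv h \<circ> (h \<circ> p \<circ> inv h) \<circ> h = p" for p
    using assms by (simp add: fun_eq_iff bij_is_inj)
  show "h \<circ> (inv h \<circ> q \<circ> h) \<circ> inv h = q" for q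
    using assms by (simp add: fun_eq_iff bij_is_inj bij_is_surj surj_f_inv_f)
  fix p :: "'m \<Rightarrow> 'm" assume p: "p \<in> {p. p permutes UNIV}"
  have "map_permutation UNIV h p = h \<circ> p \<circ> inv h"
    using assms by (auto simp: map_permutation_def restrict_id_def bij_is_surj)
  then have "sign (h \<circ> p \<circ> inv h) = sign p"
    using sign_map_permutation[of h UNIV p] p assms by (simp add: bij_is_inj)
  moreover have "(\<Prod>j\<in>UNIV. M $ j $ (h \<circ> p \<circ> inv h) j) = (\<Prod>i\<in>UNIV. M $ h i $ h (p i))"
  proof -
    have "(\<Prod>i\<in>UNIV. M $ h i $ h (p i)) = (\<Prod>i\<in>UNIV. M $ h i $ (h \<circ> p \<circ> inv h) (h i))"
      using assms by (simp add: bij_is_inj)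
    also have "\<dots> = (\<Prod>j\<in>UNIV. M $ j $ (h \<circ> p \<circ> inv h) j)"
      using prod.reindex_bij_betw[of h UNIV UNIV "\<lambda>j. M $ j $ (h \<circ> p \<circ> inv h) j"] assms by simp
    finally show ?thesis ..
  qed
  ultimately show "of_int (sign (h \<circ> p \<circ> inv h)) * (\<Prod>j\<in>UNIV. M $ j $ (h \<circ> p \<circ> inv h) j)
      = of_int (sign p) * (\<Prod>i\<in>UNIV. (\<chi> i j. M $ h i $ h j) $ i $ p i)"
    by simp
qed

lemma det_nonzero_obtains_permutation:
  fixes M :: "'a::comm_ring_1^'n::finite^'n"
  assumes "det M \<noteq> 0"
  obtains p where "p permutes UNIV" "\<And>i. M $ i $ p i \<noteq> 0"
proof (rule ccontr)
  assume none: "\<not> thesis"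
  note choose = that
  have "of_int (sign p) * (\<Prod>i\<in>UNIV. M $ i $ p i) = 0" if p: "p permutes UNIV" for p
  proof -
    obtain i where "M $ i $ p i = 0" using none p choose by blast
    then have "(\<Prod>i\<in>UNIV. M $ i $ p i) = 0" by (meson UNIV_I finite prod_zero)
    then show ?thesis by simp
  qed
  then have "det M = 0" unfolding det_def by (intro sum.neutral) simp
  with assms show False by simp
qed

lemma permutation_matching_ranks:
  fixes A B :: "real^'n::finite^'n" and r r' :: "'n \<Rightarrow> nat"
  assumes AB: "A ** B = mat 1"
    and A_supp: "\<And>m j. A $ m $ j \<noteq> 0 \<Longrightarrow> r m \<le> r' j"
    and B_supp: "\<And>j m. B $ j $ m \<noteq> 0 \<Longrightarrow> r' j \<le> r m"
  obtains s where "s permutes UNIV" "\<And>j. A $ s j $ j \<noteq> 0" "\<And>j. r (s j) = r' j"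
proof -
  have "det A * det B = 1" using AB by (metis det_I det_mul)
  then have "det A \<noteq> 0" "det B \<noteq> 0" by auto
  obtain p where p: "p permutes UNIV" "\<And>i. A $ i $ p i \<noteq> 0"
    using det_nonzero_obtains_permutation[OF \<open>det A \<noteq> 0\<close>] by blast
  obtain q where q: "q permutes UNIV" "\<And>i. B $ i $ q i \<noteq> 0"
    using det_nonzero_obtains_permutation[OF \<open>det B \<noteq> 0\<close>] by blast
  define s where "s = inv p"
  have s: "s permutes UNIV" unfolding s_def using p(1) by (rule permutes_inv)
  have A_s: "A $ s j $ j \<noteq> 0" for j
    using p s_def by (metis permutes_inverses(1))
  have le: "r (s j) \<le> r' j" for j using A_supp[OF A_s] .
  have "(\<Sum>j\<in>UNIV. r' j) \<le> (\<Sum>j\<in>UNIV. r (q j))" by (intro sum_mono B_supp q(2))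
  also have "\<dots> = (\<Sum>j\<in>UNIV. r (s j))"
    using sum.reindex_bij_betw[OF permutes_imp_bij[OF q(1)], of r]
      sum.reindex_bij_betw[OF permutes_imp_bij[OF s], of r] by simp
  finally have "(\<Sum>j\<in>UNIV. r (s j)) = (\<Sum>j\<in>UNIV. r' j)"
    using le by (simp add: order.antisym sum_mono)
  then have "r (s j) = r' j" for j
    using le by (intro sum_mono_inv[of "\<lambda>j. r (s j)" UNIV r']) auto
  with s A_s show ?thesis using that by blast
qed

lemma perm_matrix_mult: "perm_matrix \<pi> ** C = (\<chi> i j. C $ \<pi> i $ j)"
proof -
  have "(if k = \<pi> i then 1 else 0) * C $ k $ j = (if k = \<pi> i then C $ k $ j else 0)" for i j k
    by simp
  then have "(\<Sum>k\<in>UNIV. (if k = \<pi> i then 1 else 0) * C $ k $ j) = C $ \<pi> i $ j" for i j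
    by simp
  then show ?thesis by (simp add: perm_matrix_def matrix_matrix_mult_def vec_eq_iff)
qed

lemma continuous_on_matrix_vector_mult: "continuous_on UNIV (\<lambda>x. (C :: real^'a::finite^'b::finite) *v x)"
  by (rule linear_continuous_on) (simp flip: linear_conv_bounded_linear)

section \<open>Change of variables on \<open>real^'n\<close>\<close>

text \<open>The change-of-variables theorems of HOL-Analysis are stated for \<open>real^'n\<close> with
  \<open>'n::{finite,wellorder}\<close>; the type \<open>'n wo\<close> is a copy of \<open>'n\<close> carrying such an order,
  through which they are transported to arbitrary finite index types.\<close>

typedef 'a wo = "UNIV :: 'a set" by auto

instantiation wo :: (finite) linorder
begin
definition less_eq_wo :: "'a wo \<Rightarrow> 'a wo \<Rightarrow> bool" where
  "x \<le> y \<longleftrightarrow> to_nat (Rep_wo x) \<le> to_nat (Rep_wo y)"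
definition less_wo :: "'a wo \<Rightarrow> 'a wo \<Rightarrow> bool" where
  "x < y \<longleftrightarrow> to_nat (Rep_wo x) < to_nat (Rep_wo y)"
instance
  by standard (auto simp: less_eq_wo_def less_wo_def Rep_wo_inject)
end

instance wo :: (finite) finite
proof
  have "UNIV = Abs_wo ` (UNIV :: 'a set)"
    by (metis Abs_wo_cases surj_def)
  then show "finite (UNIV :: 'a wo set)" by (metis finite finite_imageI)
qed

instance wo :: (finite) wellorder
proof
  fix P :: "'a wo \<Rightarrow> bool" and a
  assume step: "\<And>x. (\<And>y. y < x \<Longrightarrow> P y) \<Longrightarrow> P x"
  have "\<forall>x. to_nat (Rep_wo x) = k \<longrightarrow> P x" for k
    by (induction k rule: less_induct) (use step in \<open>auto simp: less_wo_def\<close>)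
  then show "P a" by blast
qed

lemma Rep_wo_Abs_wo [simp]: "Rep_wo (Abs_wo i) = i"
  by (simp add: Abs_wo_inverse)

definition to_wo :: "real^'n \<Rightarrow> real^'n wo" where "to_wo z = (\<chi> a. z $ Rep_wo a)"
definition of_wo :: "real^'n wo \<Rightarrow> real^'n" where "of_wo w = (\<chi> i. w $ Abs_wo i)"

lemma to_wo_of_wo [simp]: "to_wo (of_wo w) = w" and of_wo_to_wo [simp]: "of_wo (to_wo z) = z"
  by (simp_all add: to_wo_def of_wo_def vec_eq_iff Rep_wo_inverse)

lemma bounded_linear_to_wo: "bounded_linear to_wo"
  and bounded_linear_of_wo: "bounded_linear of_wo"
  by (auto intro!: linearI simp: to_wo_def of_wo_def vec_eq_iff simp flip: linear_conv_bounded_linear)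

lemma prod_Basis_cart: "(\<Prod>b\<in>Basis. (u - l) \<bullet> b) = (\<Prod>i\<in>UNIV. u $ i - l $ i)"
  for u l :: "real^'n::finite"
proof -
  have "Basis = range (\<lambda>i. axis i (1::real) :: real^'n)"
    by (auto simp: Basis_vec_def)
  moreover have "inj (\<lambda>i. axis i (1::real) :: real^'n)"
    by (auto simp: inj_def axis_eq_axis)
  ultimately show ?thesis
    using prod.reindex[of "\<lambda>i. axis i (1::real) :: real^'n" UNIV "\<lambda>b. (u - l) \<bullet> b"]
    by (simp add: o_def inner_axis)
qed

lemma bij_Rep_wo: "bij Rep_wo"
  by (metis Rep_wo_inverse Rep_wo_Abs_wo bij_betw_byWitness subset_UNIV)

lemma of_wo_axis: "of_wo (axis b 1) = axis (Rep_wo b) (1::real)"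
  by (auto simp: of_wo_def axis_def vec_eq_iff) (metis Rep_wo_inverse)

lemma matrix_conj_wo:
  fixes L :: "real^'n::finite \<Rightarrow> real^'n"
  shows "matrix (\<lambda>w. to_wo (L (of_wo w))) = (\<chi> a b. matrix L $ Rep_wo a $ Rep_wo b)"
  by (simp add: matrix_def to_wo_def of_wo_axis)

lemma distr_lborel_of_wo: "distr lborel borel of_wo = (lborel :: (real^'n::finite) measure)"
proof (rule lborel_eqI[symmetric])
  fix l u :: "real^'n"
  assume "\<And>b. b \<in> Basis \<Longrightarrow> l \<bullet> b \<le> u \<bullet> b"
  then have le: "\<forall>i. l $ i \<le> u $ i"
    by (metis axis_in_Basis_iff cart_eq_inner_axis Basis_real_def insertI1)
  have meas: "of_wo \<in> borel_measurable (lborel :: (real^'n wo) measure)"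
    unfolding measurable_lborel2
    by (intro borel_measurable_continuous_onI linear_continuous_on bounded_linear_of_wo)
  have "of_wo -` box l u = box (to_wo l) (to_wo u)"
    by (auto simp: mem_box_cart to_wo_def of_wo_def) (metis Rep_wo_Abs_wo Rep_wo_inverse)+
  then have "emeasure (distr lborel borel of_wo) (box l u) = emeasure lborel (box (to_wo l) (to_wo u))"
    using meas by (simp add: emeasure_distr)
  also have "\<dots> = (\<Prod>a\<in>UNIV. u $ Rep_wo a - l $ Rep_wo a)"
  proof -
    have "\<forall>b\<in>Basis. to_wo l \<bullet> b \<le> to_wo u \<bullet> b"
      using le by (auto simp: Basis_vec_def inner_axis to_wo_def)
    then show ?thesis
      using le by (simp add: emeasure_lborel_box_eq prod_Basis_cart to_wo_def prod_nonneg)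
  qed
  also have "\<dots> = (\<Prod>i\<in>UNIV. u $ i - l $ i)"
    using prod.reindex_bij_betw[OF bij_Rep_wo, of "\<lambda>i. u $ i - l $ i"] by simp
  finally show "emeasure (distr lborel borel of_wo) (box l u) = (\<Prod>b\<in>Basis. (u - l) \<bullet> b)"
    by (simp add: prod_Basis_cart)
qed simp

lemma measure_image_const_jacobian_wellorder:
  fixes T :: "real^'k::{finite,wellorder} \<Rightarrow> real^'k::_"
  assumes X: "X \<in> lmeasurable" and inj: "inj_on T X"
    and der: "\<And>x. (T has_derivative T' x) (at x)"
    and jacobian: "\<And>x. \<bar>det (matrix (T' x))\<bar> = c"
  shows "measure lebesgue (T ` X) = c * measure lebesgue X"
proof -
  have "measure lebesgue (T ` X) = integral X (\<lambda>x. \<bar>det (matrix (T' x))\<bar>)"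
  proof (rule measure_differentiable_image_eq[OF _ _ inj])
    show "X \<in> sets lebesgue" using X by (simp add: fmeasurableD)
    show "(T has_derivative T' x) (at x within X)" for x using der by (rule has_derivative_at_withinI)
    show "(\<lambda>x. \<bar>det (matrix (T' x))\<bar>) integrable_on X"
      unfolding jacobian using X by (rule integrable_on_const)
  qed
  also have "\<dots> = integral X (\<lambda>x. c * 1)" unfolding jacobian by simp
  also have "\<dots> = c * measure lebesgue X"
    using X integral_mult_right[of X c "\<lambda>x. 1::real"] by (simp only: lmeasure_integral)
  finally show ?thesis .
qed

lemma emeasure_lborel_open_lmeasurable:
  fixes Y :: "'a::euclidean_space set"
  assumes "open Y" "Y \<in> lmeasurable"
  shows "emeasure lborel Y = ennreal (measure lebesgue Y)"
proof -
  have "emeasure lborel Y = emeasure lebesgue Y"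
    using \<open>open Y\<close> by (simp add: borel_open emeasure_completion)
  also have "\<dots> = measure lebesgue Y" using \<open>Y \<in> lmeasurable\<close> by (simp add: emeasure_eq_measure2)
  finally show ?thesis .
qed

lemma emeasure_preimage_box_const_jacobian_wellorder:
  fixes T S :: "real^'k::{finite,wellorder} \<Rightarrow> real^'k::_"
    and T' :: "real^'k::_ \<Rightarrow> real^'k::_ \<Rightarrow> real^'k::_"
  assumes ST: "\<And>x. S (T x) = x" and TS: "\<And>y. T (S y) = y"
    and contS: "continuous_on UNIV S"
    and der: "\<And>x. (T has_derivative T' x) (at x)"
    and jacobian: "\<And>x. \<bar>det (matrix (T' x))\<bar> = c" and c: "c > 0"
  shows "ennreal c * emeasure lborel (T -` box l u) = emeasure lborel (box l u)"
proof -
  define X where "X = T -` box l u"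
  have X_image: "X = S ` box l u"
    unfolding X_def using ST TS by (auto intro: image_eqI[of _ S "T _"])
  have "continuous_on UNIV T"
    using der by (meson continuous_at_imp_continuous_on has_derivative_continuous)
  then have "open X" unfolding X_def using continuous_on_open_vimage[of UNIV T] by auto
  moreover have "bounded X"
  proof -
    have "compact (S ` cbox l u)"
      by (rule compact_continuous_image) (use contS in \<open>auto intro: continuous_on_subset\<close>)
    moreover have "X \<subseteq> S ` cbox l u" unfolding X_image using box_subset_cbox by auto
    ultimately show ?thesis using bounded_subset compact_imp_bounded by blast
  qed
  ultimately have X: "X \<in> lmeasurable" by (rule lmeasurable_open[rotated])
  have "T ` X = box l u" unfolding X_image using TS by (auto simp: image_image)
  moreover have "inj_on T X" using ST by (intro inj_on_inverseI)
  ultimately have "measure lebesgue (box l u) = c * measure lebesgue X"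
    using measure_image_const_jacobian_wellorder[OF X _ der jacobian] by simp
  then have "emeasure lborel (box l u) = ennreal (c * measure lebesgue X)"
    using emeasure_lborel_open_lmeasurable[OF open_box lmeasurable_box, of l u] by metis
  also have "\<dots> = ennreal c * emeasure lborel X"
    using c emeasure_lborel_open_lmeasurable[OF \<open>open X\<close> X] by (simp add: ennreal_mult)
  finally show ?thesis unfolding X_def ..
qed

lemma distr_lborel_const_jacobian_wellorder:
  fixes T S :: "real^'k::{finite,wellorder} \<Rightarrow> real^'k::_"
    and T' :: "real^'k::_ \<Rightarrow> real^'k::_ \<Rightarrow> real^'k::_"
  assumes ST: "\<And>x. S (T x) = x" and TS: "\<And>y. T (S y) = y"
    and contS: "continuous_on UNIV S"
    and der: "\<And>x. (T has_derivative T' x) (at x)"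
    and jacobian: "\<And>x. \<bar>det (matrix (T' x))\<bar> = c" and c: "c > 0"
  shows "distr lborel borel T = density lborel (\<lambda>_. ennreal (1/c))"
proof -
  have measT: "T \<in> borel_measurable borel"
    using der by (meson borel_measurable_continuous_onI continuous_at_imp_continuous_on
        has_derivative_continuous)
  define M where "M = density (distr lborel borel T) (\<lambda>_. ennreal c)"
  have "lborel = M"
  proof (rule lborel_eqI)
    fix l u :: "real^'k::_"
    assume "\<And>b. b \<in> Basis \<Longrightarrow> l \<bullet> b \<le> u \<bullet> b"
    then show "emeasure M (box l u) = (\<Prod>b\<in>Basis. (u - l) \<bullet> b)"
      using emeasure_preimage_box_const_jacobian_wellorder[OF assms] measT unfolding M_def
      by (simp add: emeasure_density nn_integral_cmult_indicator emeasure_distr emeasure_lborel_box_eq)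
  qed (simp add: M_def)
  then have "density lborel (\<lambda>_. ennreal (1/c)) = density M (\<lambda>_. ennreal (1/c))" by simp
  also have "\<dots> = density (distr lborel borel T) (\<lambda>_. ennreal c * ennreal (1/c))"
    unfolding M_def by (simp add: density_density_eq)
  also have "(\<lambda>_::real^'k::_. ennreal c * ennreal (1/c)) = (\<lambda>_. 1)"
    using c by (simp flip: ennreal_mult)
  finally show ?thesis by (simp add: density_1)
qed

lemma continuous_on_conj_wo:
  "continuous_on UNIV T \<Longrightarrow> continuous_on UNIV (\<lambda>w. to_wo (T (of_wo w)))"
  by (intro continuous_on_compose2[OF linear_continuous_on[OF bounded_linear_to_wo]
        continuous_on_compose2[OF _ linear_continuous_on[OF bounded_linear_of_wo]]]) auto

lemma has_derivative_conj_wo: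
  assumes "(T has_derivative T') (at (of_wo w))"
  shows "((\<lambda>w. to_wo (T (of_wo w))) has_derivative (\<lambda>v. to_wo (T' (of_wo v)))) (at w)"
proof -
  have "((\<lambda>w. T (of_wo w)) has_derivative (\<lambda>v. T' (of_wo v))) (at w)"
    using assms bounded_linear.has_derivative[OF bounded_linear_of_wo has_derivative_ident]
    by (rule has_derivative_compose[of of_wo, unfolded o_def, rotated])
  then show ?thesis using bounded_linear.has_derivative[OF bounded_linear_to_wo] by blast
qed

lemma distr_lborel_conj_wo:
  fixes T :: "real^'n::finite \<Rightarrow> real^'n"
  assumes "continuous_on UNIV T"
  shows "distr lborel borel T = distr (distr lborel borel (\<lambda>w. to_wo (T (of_wo w)))) borel of_wo"
proof -
  have of_wo: "of_wo \<in> borel_measurable (borel :: (real^'n wo) measure)"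
    by (intro borel_measurable_continuous_onI linear_continuous_on bounded_linear_of_wo)
  have "distr lborel borel T = distr (distr lborel borel of_wo) borel T"
    by (simp add: distr_lborel_of_wo)
  also have "\<dots> = distr (distr lborel borel (\<lambda>w. to_wo (T (of_wo w)))) borel of_wo"
    using of_wo assms continuous_on_conj_wo[OF assms]
    by (simp add: distr_distr o_def borel_measurable_continuous_onI)
  finally show ?thesis .
qed

lemma distr_lborel_const_jacobian:
  fixes T S :: "real^'n::finite \<Rightarrow> real^'n" and T' :: "real^'n \<Rightarrow> real^'n \<Rightarrow> real^'n"
  assumes ST: "\<And>x. S (T x) = x" and TS: "\<And>y. T (S y) = y"
    and contS: "continuous_on UNIV S"
    and der: "\<And>x. (T has_derivative T' x) (at x)"
    and jacobian: "\<And>x. \<bar>det (matrix (T' x))\<bar> = c" and c: "c > 0"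
  shows "distr lborel borel T = density lborel (\<lambda>_. ennreal (1/c))"
proof -
  have "\<bar>det (matrix (\<lambda>v. to_wo (T' (of_wo w) (of_wo v))))\<bar> = c" for w
    using jacobian by (simp add: matrix_conj_wo det_reindex[OF bij_Rep_wo])
  then have "distr lborel borel (\<lambda>w. to_wo (T (of_wo w))) = density lborel (\<lambda>_. ennreal (1/c))"
    using continuous_on_conj_wo[OF contS] has_derivative_conj_wo[OF der] c
    by (intro distr_lborel_const_jacobian_wellorder[where S="\<lambda>w. to_wo (S (of_wo w))"])
      (simp_all add: ST TS)
  moreover have "continuous_on UNIV T"
    using der by (meson continuous_at_imp_continuous_on has_derivative_continuous)
  ultimately have "distr lborel borel T = distr (density lborel (\<lambda>_. ennreal (1/c))) borel of_wo"
    using distr_lborel_conj_wo[of T] by simp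
  also have "\<dots> = density (distr lborel borel of_wo) (\<lambda>_. ennreal (1/c))"
    by (simp add: density_distr borel_measurable_continuous_onI linear_continuous_on
        bounded_linear_of_wo)
  finally show ?thesis by (simp add: distr_lborel_of_wo)
qed

lemma distr_density_inverse_map:
  fixes T S :: "real^'n::finite \<Rightarrow> real^'n::_" and g :: "real^'n::_ \<Rightarrow> ennreal"
  assumes ST: "\<And>x. S (T x) = x" and TS: "\<And>y. T (S y) = y"
    and contS: "continuous_on UNIV S" and contT: "continuous_on UNIV T"
    and D: "distr lborel borel T = density lborel (\<lambda>_. ennreal (1/c))" and c: "c > 0"
    and g: "g \<in> borel_measurable borel"
  shows "distr (density lborel g) borel S = density lborel (\<lambda>z. g (T z) * ennreal c)"
proof -
  have mT: "T \<in> borel_measurable borel" using contT by (rule borel_measurable_continuous_onI)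
  have mS: "S \<in> borel_measurable borel" using contS by (rule borel_measurable_continuous_onI)
  define \<nu> where "\<nu> = density lborel (\<lambda>z. g (T z) * ennreal c)"
  have "distr \<nu> borel T = density (distr lborel borel T) (\<lambda>y. g y * ennreal c)"
    unfolding \<nu>_def using mT g by (subst density_distr) auto
  also have "\<dots> = density lborel (\<lambda>y. ennreal (1/c) * (g y * ennreal c))"
    unfolding D using g by (subst density_density_eq) auto
  also have "(\<lambda>y. ennreal (1/c) * (g y * ennreal c)) = g"
  proof
    fix y
    have "ennreal (1/c) * (g y * ennreal c) = g y * (ennreal (1/c) * ennreal c)"
      by (simp add: ac_simps)
    also have "ennreal (1/c) * ennreal c = 1" using c by (simp add: ennreal_mult[symmetric])
    finally show "ennreal (1/c) * (g y * ennreal c) = g y" by simp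
  qed
  finally have e: "distr \<nu> borel T = density lborel g" .
  have "distr (density lborel g) borel S = distr (distr \<nu> borel T) borel S" by (simp add: e)
  also have "\<dots> = distr \<nu> borel (\<lambda>x. S (T x))"
    using mT mS unfolding \<nu>_def by (subst distr_distr) (auto simp: o_def)
  also have "\<dots> = distr \<nu> borel (\<lambda>x. x)" by (simp add: ST)
  also have "\<dots> = \<nu>" by (rule distr_id2) (simp add: \<nu>_def)
  finally show ?thesis unfolding \<nu>_def .
qed

section \<open>Densities on Euclidean space\<close>

lemma borel_measurable_ennreal_continuous:
  "continuous_on UNIV g \<Longrightarrow> (\<lambda>z. ennreal (g z)) \<in> borel_measurable borel"
  by (rule measurable_compose[OF borel_measurable_continuous_onI measurable_ennreal])

lemma density_lborel_continuous_unique: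
  fixes g h :: "'a::euclidean_space \<Rightarrow> real"
  assumes eq: "density lborel (\<lambda>z. ennreal (g z)) = density lborel (\<lambda>z. ennreal (h z))"
    and cont: "continuous_on UNIV g" "continuous_on UNIV h"
    and nonneg: "\<And>z. 0 \<le> g z" "\<And>z. 0 \<le> h z"
  shows "g = h"
proof
  fix z
  have "AE z in lborel. ennreal (g z) = ennreal (h z)"
    using eq borel_measurable_ennreal_continuous[OF cont(1)] borel_measurable_ennreal_continuous[OF cont(2)]
      sigma_finite_measure.density_unique_iff[OF sigma_finite_lborel] by auto
  then have "AE z in lborel. g z = h z"
    by (rule AE_mp) (use nonneg in auto)
  then have "AE z in lebesgue. z \<in> {z. g z = h z}" by (simp add: AE_completion)
  moreover have "closed {z. g z = h z}"
    using cont by (intro closed_Collect_eq) auto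
  ultimately show "g z = h z" using mem_closed_if_AE_lebesgue by blast
qed

text \<open>The image of a singular matrix lies in a hyperplane, which is a null set.\<close>

lemma invertible_if_distr_density:
  fixes A :: "real^'n::finite^'n"
  assumes law: "distr M borel (\<lambda>x. A *v x) = density lborel g"
    and meas: "(\<lambda>x. A *v x) \<in> borel_measurable M"
    and g: "g \<in> borel_measurable lborel" and nonzero: "emeasure M (space M) \<noteq> 0"
  shows "invertible A"
proof (rule ccontr)
  assume "\<not> invertible A"
  then have "\<not> invertible (transpose A)" by (metis transpose_invertible transpose_transpose)
  then obtain y where y: "y \<noteq> 0" "transpose A *v y = 0"
    by (metis invertible_left_inverse matrix_left_invertible_ker)
  define P where "P = {x. y \<bullet> x = 0}"
  have range_in_P: "A *v x \<in> P" for x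
    using y(2) dot_lmul_matrix[of y A x] by (simp add: P_def)
  have "P \<in> sets borel" unfolding P_def by (intro borel_closed closed_hyperplane)
  moreover have "negligible P" unfolding P_def using y(1) by (intro negligible_hyperplane) auto
  ultimately have "P \<in> null_sets lborel"
    by (simp add: negligible_iff_null_sets null_sets_completion_iff)
  then have "P \<in> null_sets (density lborel g)"
    using g by (auto simp: null_sets_density_iff intro: AE_I')
  moreover have "(\<lambda>x. A *v x) -` P \<inter> space M = space M" using range_in_P by auto
  ultimately have "emeasure M (space M) = 0"
    using meas \<open>P \<in> sets borel\<close> by (metis emeasure_distr law null_setsD1)
  with nonzero show False ..
qed

section \<open>Second directional derivatives\<close>

definition C2_witnesses :: "(real^'n \<Rightarrow> real) \<Rightarrow> (real^'n \<Rightarrow> ((real^'n) \<Rightarrow>\<^sub>L real))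
    \<Rightarrow> (real^'n \<Rightarrow> ((real^'n) \<Rightarrow>\<^sub>L ((real^'n) \<Rightarrow>\<^sub>L real))) \<Rightarrow> bool" where
  "C2_witnesses g Dg D2g \<longleftrightarrow> (\<forall>z. (g has_derivative blinfun_apply (Dg z)) (at z)) \<and>
      (\<forall>z. (Dg has_derivative blinfun_apply (D2g z)) (at z)) \<and> continuous_on UNIV D2g"

lemma C2_iff_witnesses: "C2 g \<longleftrightarrow> (\<exists>Dg D2g. C2_witnesses g Dg D2g)"
  unfolding C2_def C2_witnesses_def by blast

lemma C2_witnesses_line_deriv:
  assumes "C2_witnesses g Dg D2g"
  shows "((\<lambda>s. g (z + s *\<^sub>R v)) has_real_derivative (Dg (z + s *\<^sub>R v)) v) (at s)"
proof -
  have "((\<lambda>s. z + s *\<^sub>R v) has_derivative (\<lambda>t. t *\<^sub>R v)) (at s)"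
    by (auto intro!: derivative_eq_intros)
  moreover have "(g has_derivative blinfun_apply (Dg (z + s *\<^sub>R v))) (at (z + s *\<^sub>R v))"
    using assms unfolding C2_witnesses_def by blast
  ultimately have "((\<lambda>s. g (z + s *\<^sub>R v)) has_derivative (\<lambda>t. (Dg (z + s *\<^sub>R v)) (t *\<^sub>R v))) (at s)"
    using has_derivative_compose[of "\<lambda>s. z + s *\<^sub>R v" "\<lambda>t. t *\<^sub>R v" s UNIV g] by (simp add: o_def)
  then show ?thesis
    by (simp add: has_field_derivative_def blinfun.scaleR_right mult_commute_abs)
qed

lemma C2_witnesses_line_deriv2:
  assumes "C2_witnesses g Dg D2g"
  shows "((\<lambda>s. (Dg (z + s *\<^sub>R v)) v) has_real_derivative (D2g (z + s *\<^sub>R v)) v v) (at s)"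
proof -
  have "((\<lambda>s. z + s *\<^sub>R v) has_derivative (\<lambda>t. t *\<^sub>R v)) (at s)"
    by (auto intro!: derivative_eq_intros)
  moreover have "(Dg has_derivative blinfun_apply (D2g (z + s *\<^sub>R v))) (at (z + s *\<^sub>R v))"
    using assms unfolding C2_witnesses_def by blast
  ultimately have "((\<lambda>s. Dg (z + s *\<^sub>R v)) has_derivative (\<lambda>t. (D2g (z + s *\<^sub>R v)) (t *\<^sub>R v))) (at s)"
    using has_derivative_compose[of "\<lambda>s. z + s *\<^sub>R v" "\<lambda>t. t *\<^sub>R v" s UNIV Dg] by (simp add: o_def)
  then have "((\<lambda>s. blinfun_apply (Dg (z + s *\<^sub>R v)) v) has_derivative (\<lambda>t. blinfun_apply ((D2g (z + s *\<^sub>R v)) (t *\<^sub>R v)) v)) (at s)"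
    by (rule bounded_linear.has_derivative[OF blinfun.bounded_linear_left])
  then show ?thesis
    by (simp add: has_field_derivative_def blinfun.scaleR_right blinfun.scaleR_left mult_commute_abs)
qed

lemma deriv_line_C2_witnesses:
  assumes "C2_witnesses g Dg D2g"
  shows "deriv (\<lambda>s. g (z + s *\<^sub>R v)) = (\<lambda>s. (Dg (z + s *\<^sub>R v)) v)"
  using C2_witnesses_line_deriv[OF assms] by (auto intro!: DERIV_imp_deriv)

lemma dir2_C2_witnesses:
  assumes "C2_witnesses g Dg D2g"
  shows "dir2 g v z = (D2g z) v v"
  unfolding dir2_def deriv_line_C2_witnesses[OF assms]
  using C2_witnesses_line_deriv2[OF assms, of z v 0] by (simp add: DERIV_imp_deriv)

definition dir1 :: "(real^'n \<Rightarrow> real) \<Rightarrow> real^'n \<Rightarrow> real^'n \<Rightarrow> real" where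
  "dir1 g v z = deriv (\<lambda>s. g (z + s *\<^sub>R v)) 0"

lemma dir1_C2_witnesses:
  assumes "C2_witnesses g Dg D2g"
  shows "dir1 g v z = (Dg z) v"
  unfolding dir1_def deriv_line_C2_witnesses[OF assms] by simp

lemma continuous_on_C2_witnesses: "C2_witnesses g Dg D2g \<Longrightarrow> continuous_on UNIV g"
  unfolding C2_witnesses_def by (meson continuous_at_imp_continuous_on has_derivative_continuous)

lemma has_derivative_zero_if_constant_along:
  fixes g :: "'a::real_normed_vector \<Rightarrow> real"
  assumes D: "(g has_derivative D) (at z)" and c: "\<And>s. g (z + s *\<^sub>R v) = g z"
  shows "D v = 0"
proof -
  have lin: "bounded_linear D" using D by (rule has_derivative_bounded_linear)
  have "((\<lambda>s. z + s *\<^sub>R v) has_derivative (\<lambda>s. s *\<^sub>R v)) (at 0)"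
    by (auto intro!: derivative_eq_intros)
  then have "((\<lambda>s. g (z + s *\<^sub>R v)) has_derivative (\<lambda>s. D (s *\<^sub>R v))) (at 0)"
    using has_derivative_compose[of "\<lambda>s. z + s *\<^sub>R v" "\<lambda>s. s *\<^sub>R v" 0 UNIV g D] D by (simp add: o_def)
  then have "((\<lambda>s. g (z + s *\<^sub>R v)) has_real_derivative D v) (at 0)"
    using linear_cmul[OF bounded_linear.linear[OF lin]] by (simp add: has_field_derivative_def mult_commute_abs)
  moreover have "((\<lambda>s. g (z + s *\<^sub>R v)) has_real_derivative 0) (at 0)"
    unfolding c by simp
  ultimately show ?thesis by (rule DERIV_unique)
qed

lemma DERIV_add_const_iff:
  "((\<lambda>s. g s + K) has_field_derivative D) (at x) \<longleftrightarrow> (g has_field_derivative D) (at x)"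
proof
  assume "((\<lambda>s. g s + K) has_field_derivative D) (at x)"
  from DERIV_diff[OF this DERIV_const[of K]] show "(g has_field_derivative D) (at x)" by simp
next
  assume "(g has_field_derivative D) (at x)"
  from DERIV_add[OF this DERIV_const[of K]] show "((\<lambda>s. g s + K) has_field_derivative D) (at x)" by simp
qed

lemma deriv_add_const: "deriv (\<lambda>s. g s + K) = deriv g"
  unfolding deriv_def[abs_def] DERIV_add_const_iff ..

lemma dir2_linear_transfer:
  fixes F F' :: "real^'n::finite \<Rightarrow> real" and B :: "real^'n^'n"
  assumes "\<And>z. F z = F' (B *v z) + K"
  shows "dir2 F v z = dir2 F' (B *v v) (B *v z)"
proof -
  have "(\<lambda>s. F (z + s *\<^sub>R v)) = (\<lambda>s. F' (B *v z + s *\<^sub>R (B *v v)) + K)"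
    using assms by (simp add: matrix_vector_right_distrib matrix_vector_mult_scaleR)
  then show ?thesis unfolding dir2_def by (simp add: deriv_add_const)
qed

definition const_dir2_directions :: "(real^'n \<Rightarrow> real) \<Rightarrow> (real^'n) set" where
  "const_dir2_directions F = {v. \<exists>c. \<forall>z. dir2 F v z = c}"

lemma const_dir2_directions_transfer:
  fixes B A :: "real^'n::finite^'n"
  assumes F: "\<And>z. F z = F' (B *v z) + K" and BA: "B ** A = mat 1"
  shows "v \<in> const_dir2_directions F \<longleftrightarrow> B *v v \<in> const_dir2_directions F'"
proof -
  have dir2_eq: "dir2 F v z = dir2 F' (B *v v) (B *v z)" for z
    using F by (rule dir2_linear_transfer)
  have BA_w: "B *v (A *v w) = w" for w by (simp add: matrix_vector_mul_assoc BA)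
  show ?thesis
  proof
    assume "v \<in> const_dir2_directions F"
    then obtain c where c: "\<And>z. dir2 F v z = c" unfolding const_dir2_directions_def by blast
    have "dir2 F' (B *v v) w = c" for w using c[of "A *v w"] by (simp add: dir2_eq BA_w)
    then show "B *v v \<in> const_dir2_directions F'" unfolding const_dir2_directions_def by blast
  next
    assume "B *v v \<in> const_dir2_directions F'"
    then obtain c where "\<And>w. dir2 F' (B *v v) w = c" unfolding const_dir2_directions_def by blast
    then have "dir2 F v z = c" for z by (simp add: dir2_eq)
    then show "v \<in> const_dir2_directions F" unfolding const_dir2_directions_def by blast
  qed
qed

section \<open>A single structural equation model\<close>

locale sem_model =
  fixes H :: "real^'n::finite^'d::finite" and G :: "('n \<times> 'n) set"
    and f :: "'n \<Rightarrow> real^'n \<Rightarrow> real" and \<sigma> :: "'n \<Rightarrow> real"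
  assumes valid: "valid_model H G f \<sigma>"
begin

lemma acyclic: "acyclic G"
  and depends: "depends_only_on (f i) (parents G i)"
  and C2_f: "C2 (f i)"
  and nonlinear: "dir_nonlinear (f i) (parents G i)"
  and sigma_pos: "\<sigma> i > 0"
  using valid unfolding valid_model_def by auto

lemma not_self_loop: "(i, i) \<notin> G"
  using acyclic unfolding acyclic_def by auto

lemma f_cong: "(\<And>j. (j, i) \<in> G \<Longrightarrow> z $ j = z' $ j) \<Longrightarrow> f i z = f i z'"
  using depends[of i] unfolding depends_only_on_def parents_def by auto

definition Df :: "'n \<Rightarrow> real^'n \<Rightarrow> (real^'n) \<Rightarrow>\<^sub>L real" where
  "Df i = (SOME Dg. \<exists>D2g. C2_witnesses (f i) Dg D2g)"

definition D2f :: "'n \<Rightarrow> real^'n \<Rightarrow> (real^'n) \<Rightarrow>\<^sub>L (real^'n) \<Rightarrow>\<^sub>L real" where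
  "D2f i = (SOME D2g. C2_witnesses (f i) (Df i) D2g)"

lemma C2_witnesses_f: "C2_witnesses (f i) (Df i) (D2f i)"
proof -
  have "\<exists>Dg D2g. C2_witnesses (f i) Dg D2g" using C2_f C2_iff_witnesses by blast
  then have "\<exists>D2g. C2_witnesses (f i) (Df i) D2g" unfolding Df_def by (rule someI_ex)
  then show ?thesis unfolding D2f_def by (rule someI_ex)
qed

lemma has_derivative_f: "(f i has_derivative blinfun_apply (Df i z)) (at z)"
  using C2_witnesses_f unfolding C2_witnesses_def by blast

lemma continuous_on_f: "continuous_on UNIV (f i)"
  using C2_witnesses_f by (rule continuous_on_C2_witnesses)

lemma Df_non_parent: "(j, i) \<notin> G \<Longrightarrow> Df i z (axis j 1) = 0"
  by (rule has_derivative_zero_if_constant_along[OF has_derivative_f])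
    (rule f_cong, auto simp: axis_def)

definition residual :: "real^'n \<Rightarrow> real^'n" where
  "residual z = (\<chi> i. z $ i - f i z)"

lemma sem_solution_unique:
  assumes "\<forall>i. z $ i = f i z + e $ i" "\<forall>i. z' $ i = f i z' + e $ i"
  shows "z = z'"
proof -
  have "z $ i = z' $ i" for i
  proof (induction i rule: wf_induct[OF finite_acyclic_wf[OF finite acyclic]])
    case (1 i)
    then have "f i z = f i z'" by (intro f_cong) auto
    then show ?case using assms by simp
  qed
  then show ?thesis by (simp add: vec_eq_iff)
qed

text \<open>Solvability is proved for every ancestrally closed set of nodes, by adding a sink of the set
  at a time.\<close>

lemma sem_solvable_on:
  "(\<forall>i\<in>A. \<forall>j. (j, i) \<in> G \<longrightarrow> j \<in> A) \<Longrightarrow> \<exists>z. \<forall>i\<in>A. z $ i = f i z + e $ i"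
proof (induction "card A" arbitrary: A)
  case 0
  then show ?case by auto
next
  case (Suc n)
  then obtain x where "x \<in> A" by fastforce
  obtain i where iA: "i \<in> A" and "\<And>w. (w, i) \<in> G\<inverse> \<Longrightarrow> w \<notin> A"
    using wfE_min[OF finite_acyclic_wf_converse[OF finite acyclic] \<open>x \<in> A\<close>] by blast
  then have sink: "\<And>w. w \<in> A \<Longrightarrow> (i, w) \<notin> G" by auto
  have "card (A - {i}) = n" using Suc iA by auto
  moreover have "\<forall>k\<in>A - {i}. \<forall>j. (j, k) \<in> G \<longrightarrow> j \<in> A - {i}"
    using Suc.prems sink by blast
  ultimately obtain z where z: "\<forall>k\<in>A - {i}. z $ k = f k z + e $ k" using Suc.hyps by blast
  define z' where "z' = (\<chi> j. if j = i then f i z + e $ i else z $ j)"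
  have "f k z' = f k z" if "k \<in> A" for k
    by (rule f_cong) (use sink that in \<open>auto simp: z'_def\<close>)
  then have "\<forall>k\<in>A. z' $ k = f k z' + e $ k"
    using z iA by (auto simp: z'_def)
  then show ?case by blast
qed

lemma sem_solve_eq: "sem_solve f e $ i = f i (sem_solve f e) + e $ i"
proof -
  have "\<exists>!z. \<forall>i. z $ i = f i z + e $ i"
    using sem_solvable_on[of UNIV e] sem_solution_unique by auto
  then show ?thesis unfolding sem_solve_def by (rule theI'[THEN spec])
qed

lemma residual_sem_solve [simp]: "residual (sem_solve f e) = e"
  by (simp add: residual_def vec_eq_iff sem_solve_eq)

lemma sem_solve_residual [simp]: "sem_solve f (residual z) = z"
  by (rule sem_solution_unique[of _ "residual z"]) (simp_all add: sem_solve_eq residual_def)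

lemma continuous_on_residual: "continuous_on UNIV residual"
  unfolding residual_def
  by (intro continuous_on_vec_lambda continuous_on_diff continuous_on_component continuous_on_id
      continuous_on_f)

text \<open>The residual map is a continuous bijection of \<open>real^'n\<close>, so its inverse is continuous by
  invariance of domain.\<close>

lemma continuous_on_sem_solve: "continuous_on UNIV (sem_solve f)"
proof -
  have "open (sem_solve f -` B)" if "open B" for B
  proof -
    have "sem_solve f -` B = residual ` B"
      by (auto intro: image_eqI[of _ residual "sem_solve f _"])
    moreover have "open (residual ` B)"
      by (rule invariance_of_domain[OF continuous_on_subset[OF continuous_on_residual] that])
        (auto intro: inj_on_inverseI[of _ "sem_solve f"])
    ultimately show ?thesis by simp
  qed
  then show ?thesis using continuous_on_open_vimage[of UNIV] by auto
qed

definition residual_deriv :: "real^'n \<Rightarrow> real^'n \<Rightarrow> real^'n" where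
  "residual_deriv z v = (\<chi> i. v $ i - Df i z v)"

lemma has_derivative_residual: "(residual has_derivative residual_deriv z) (at z)"
  unfolding has_derivative_componentwise_within[of residual _ z UNIV]
  by (auto simp: Basis_vec_def inner_axis residual_def residual_deriv_def
      intro!: has_derivative_diff bounded_linear_imp_has_derivative[OF bounded_linear_vec_nth]
      has_derivative_f)

text \<open>Ordering the nodes by height makes the Jacobian of the residual map unitriangular.\<close>

lemma det_residual_deriv: "det (matrix (residual_deriv z)) = 1"
proof (rule det_eq_1_if_ranked_unitriangular[where r="node_height G"])
  have entry: "matrix (residual_deriv z) $ i $ j = (if j = i then 1 else 0) - Df i z (axis j 1)" for i j
    by (simp add: matrix_def residual_deriv_def axis_def)
  show "matrix (residual_deriv z) $ i $ i = 1" for i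
    using entry Df_non_parent not_self_loop by simp
  show "node_height G i < node_height G j" if "i \<noteq> j" "matrix (residual_deriv z) $ i $ j \<noteq> 0" for i j
    using that entry Df_non_parent node_height_less_parent[OF acyclic] by (metis diff_zero)
qed

definition latent_density :: "real^'n \<Rightarrow> real" where
  "latent_density z = (\<Prod>i\<in>UNIV. normal_density 0 (\<sigma> i) (z $ i - f i z))"

lemma latent_density_pos: "latent_density z > 0"
  unfolding latent_density_def using sigma_pos by (intro prod_pos) (auto simp: normal_density_pos)

lemma continuous_on_latent_density: "continuous_on UNIV latent_density"
proof -
  have "\<sigma> i \<noteq> 0" for i using sigma_pos[of i] by simp
  then show ?thesis
    unfolding latent_density_def normal_density_def
    by (intro continuous_intros continuous_on_component continuous_on_id continuous_on_f) auto
qed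

lemma distr_sem_solve:
  "distr (noise_measure \<sigma>) borel (sem_solve f) = density lborel (\<lambda>z. ennreal (latent_density z))"
proof -
  define g where "g = (\<lambda>e::real^'n. \<Prod>i\<in>UNIV. ennreal (normal_density 0 (\<sigma> i) (e $ i)))"
  have "g \<in> borel_measurable borel" unfolding g_def by measurable
  moreover have "distr lborel borel residual = density lborel (\<lambda>_. ennreal (1/1))"
    by (rule distr_lborel_const_jacobian[OF sem_solve_residual residual_sem_solve
          continuous_on_sem_solve has_derivative_residual]) (simp_all add: det_residual_deriv)
  ultimately have "distr (density lborel g) borel (sem_solve f)
      = density lborel (\<lambda>z. g (residual z) * ennreal 1)"
    by (intro distr_density_inverse_map[OF sem_solve_residual residual_sem_solve
          continuous_on_sem_solve continuous_on_residual]) simp_all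
  moreover have "g (residual z) * ennreal 1 = ennreal (latent_density z)" for z
    unfolding g_def latent_density_def residual_def by (simp add: prod_ennreal normal_density_nonneg)
  ultimately show ?thesis unfolding noise_measure_def g_def by simp
qed

text \<open>Up to an additive constant, \<open>energy 0\<close> is the negative logarithm of the latent density, and
  \<open>energy k\<close> keeps only the noise terms of the nodes of height at least \<open>k\<close>.\<close>

definition high_nodes :: "nat \<Rightarrow> 'n set" where
  "high_nodes k = {i. k \<le> node_height G i}"

definition energy :: "nat \<Rightarrow> real^'n \<Rightarrow> real" where
  "energy k z = (\<Sum>i\<in>high_nodes k. (z $ i - f i z)\<^sup>2 / (2 * (\<sigma> i)\<^sup>2))"

definition low_directions :: "nat \<Rightarrow> (real^'n) set" where
  "low_directions k = {v. \<forall>m. k < node_height G m \<longrightarrow> v $ m = 0}"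

definition normalizer :: real where
  "normalizer = (\<Prod>i\<in>UNIV. 1 / sqrt (2 * pi * (\<sigma> i)\<^sup>2))"

lemma normalizer_pos: "normalizer > 0"
  unfolding normalizer_def using sigma_pos by (intro prod_pos) (simp add: power2_eq_square)

lemma latent_density_eq: "latent_density z = normalizer * exp (- energy 0 z)"
proof -
  have "latent_density z = (\<Prod>i\<in>UNIV. 1 / sqrt (2 * pi * (\<sigma> i)\<^sup>2) * exp (- (z $ i - f i z)\<^sup>2 / (2 * (\<sigma> i)\<^sup>2)))"
    unfolding latent_density_def normal_density_def by simp
  also have "\<dots> = normalizer * (\<Prod>i\<in>UNIV. exp (- (z $ i - f i z)\<^sup>2 / (2 * (\<sigma> i)\<^sup>2)))"
    unfolding normalizer_def by (rule prod.distrib)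
  also have "\<dots> = normalizer * exp (\<Sum>i\<in>UNIV. - (z $ i - f i z)\<^sup>2 / (2 * (\<sigma> i)\<^sup>2))"
    by (simp add: exp_sum)
  also have "\<dots> = normalizer * exp (- energy 0 z)"
    unfolding energy_def high_nodes_def by (simp add: sum_negf)
  finally show ?thesis .
qed

lemma high_nodes_Suc: "high_nodes k = high_nodes (Suc k) \<union> {i. node_height G i = k}"
  by (auto simp: high_nodes_def)

lemma low_directions_parent:
  assumes "v \<in> low_directions k" "i \<in> high_nodes k" "(j, i) \<in> G"
  shows "v $ j = 0"
  using assms node_height_less_parent[OF acyclic assms(3)]
  by (simp add: low_directions_def high_nodes_def)

lemma axis_low_directions: "axis j 1 \<in> low_directions (node_height G j)"
  by (auto simp: low_directions_def axis_def)

lemma energy_add_low_direction: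
  assumes u: "u \<in> low_directions k"
  shows "energy k (z + u)
    = energy (Suc k) z + (\<Sum>i\<in>{i. node_height G i = k}. (z $ i + u $ i - f i z)\<^sup>2 / (2 * (\<sigma> i)\<^sup>2))"
proof -
  have f_eq: "f i (z + u) = f i z" if "i \<in> high_nodes k" for i
    by (rule f_cong) (use low_directions_parent[OF u that] in simp)
  have u_eq: "u $ i = 0" if "i \<in> high_nodes (Suc k)" for i
    using u that by (simp add: low_directions_def high_nodes_def)
  have "energy k (z + u) = (\<Sum>i\<in>high_nodes (Suc k). ((z + u) $ i - f i (z + u))\<^sup>2 / (2 * (\<sigma> i)\<^sup>2))
       + (\<Sum>i\<in>{i. node_height G i = k}. ((z + u) $ i - f i (z + u))\<^sup>2 / (2 * (\<sigma> i)\<^sup>2))"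
    unfolding energy_def high_nodes_Suc[of k] by (rule sum.union_disjoint) (auto simp: high_nodes_def)
  also have "\<dots> = energy (Suc k) z
       + (\<Sum>i\<in>{i. node_height G i = k}. (z $ i + u $ i - f i z)\<^sup>2 / (2 * (\<sigma> i)\<^sup>2))"
    unfolding energy_def using u_eq f_eq by (intro arg_cong2[where f="(+)"] sum.cong) (auto simp: high_nodes_def)
  finally show ?thesis .
qed

text \<open>\<open>energy (Suc k)\<close> is obtained from \<open>energy k\<close> by minimising along the directions in
  \<open>low_directions k\<close>, the minimum being attained where the noise of every node of height \<open>k\<close>
  vanishes.\<close>

lemma energy_Suc_le: "u \<in> low_directions k \<Longrightarrow> energy (Suc k) z \<le> energy k (z + u)"
  by (simp add: energy_add_low_direction sum_nonneg)

lemma energy_Suc_attained: "\<exists>u\<in>low_directions k. energy k (z + u) = energy (Suc k) z"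
proof
  define u where "u = (\<chi> i. if node_height G i = k then f i z - z $ i else 0)"
  show "u \<in> low_directions k" by (simp add: u_def low_directions_def)
  then show "energy k (z + u) = energy (Suc k) z"
    by (simp add: energy_add_low_direction u_def)
qed

subsection \<open>Directions of constant curvature of the energies\<close>

definition node_dir2 :: "'n \<Rightarrow> real^'n \<Rightarrow> real^'n \<Rightarrow> real" where
  "node_dir2 i v z = ((v $ i - dir1 (f i) v z)\<^sup>2 - (z $ i - f i z) * dir2 (f i) v z) / (\<sigma> i)\<^sup>2"

lemma dir1_f: "dir1 (f i) v z = Df i z v"
  by (rule dir1_C2_witnesses[OF C2_witnesses_f])

lemma dir2_f: "dir2 (f i) v z = D2f i z v v"
  by (rule dir2_C2_witnesses[OF C2_witnesses_f])

lemma has_real_derivative_noise_line: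
  "((\<lambda>s. (z + s *\<^sub>R v) $ i - f i (z + s *\<^sub>R v)) has_real_derivative (v $ i - Df i (z + s *\<^sub>R v) v)) (at s)"
proof -
  have "((\<lambda>s. z $ i + s * v $ i) has_real_derivative v $ i) (at s)"
    by (auto intro!: derivative_eq_intros)
  from DERIV_diff[OF this C2_witnesses_line_deriv[OF C2_witnesses_f]] show ?thesis by simp
qed

lemma has_real_derivative_noise_line':
  "((\<lambda>s. v $ i - Df i (z + s *\<^sub>R v) v) has_real_derivative (- D2f i (z + s *\<^sub>R v) v v)) (at s)"
  using DERIV_diff[OF DERIV_const C2_witnesses_line_deriv2[OF C2_witnesses_f]] by simp

lemma dir2_energy: "dir2 (energy k) v z = (\<Sum>i\<in>high_nodes k. node_dir2 i v z)"
proof -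
  let ?e = "\<lambda>i s. (z + s *\<^sub>R v) $ i - f i (z + s *\<^sub>R v)"
  let ?e' = "\<lambda>i s. v $ i - Df i (z + s *\<^sub>R v) v"
  have "((\<lambda>s. (?e i s)\<^sup>2 / (2 * (\<sigma> i)\<^sup>2)) has_real_derivative ?e i s * ?e' i s / (\<sigma> i)\<^sup>2) (at s)"
    for i s using sigma_pos[of i]
    by (intro DERIV_cong[OF DERIV_cdivide[OF DERIV_power[OF has_real_derivative_noise_line]]])
      (simp add: field_simps)
  then have "((\<lambda>s. energy k (z + s *\<^sub>R v)) has_real_derivative
      (\<Sum>i\<in>high_nodes k. ?e i s * ?e' i s / (\<sigma> i)\<^sup>2)) (at s)" for s
    unfolding energy_def by (intro DERIV_sum)
  then have "deriv (\<lambda>s. energy k (z + s *\<^sub>R v)) = (\<lambda>s. \<Sum>i\<in>high_nodes k. ?e i s * ?e' i s / (\<sigma> i)\<^sup>2)"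
    by (auto intro!: DERIV_imp_deriv)
  moreover have "((\<lambda>s. \<Sum>i\<in>high_nodes k. ?e i s * ?e' i s / (\<sigma> i)\<^sup>2) has_real_derivative
      (\<Sum>i\<in>high_nodes k. ((?e' i 0)\<^sup>2 - ?e i 0 * D2f i z v v) / (\<sigma> i)\<^sup>2)) (at 0)"
    by (intro DERIV_sum DERIV_cong[OF DERIV_cdivide[OF DERIV_mult[OF has_real_derivative_noise_line
          has_real_derivative_noise_line']]]) (simp add: power2_eq_square algebra_simps)
  ultimately show ?thesis
    unfolding node_dir2_def dir1_f dir2_f by (simp add: dir2_def DERIV_imp_deriv)
qed

lemma node_dir2_if_parents_zero:
  assumes "\<And>j. (j, i) \<in> G \<Longrightarrow> v $ j = 0"
  shows "node_dir2 i v z = (v $ i)\<^sup>2 / (\<sigma> i)\<^sup>2"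
proof -
  have "f i (w + s *\<^sub>R v) = f i w" for w s by (rule f_cong) (simp add: assms)
  then show ?thesis unfolding node_dir2_def dir1_def dir2_def by simp
qed

lemma f_shift_non_parent:
  assumes "(j, i) \<notin> G"
  shows "f i (w + t *\<^sub>R axis j 1 + s *\<^sub>R v) = f i (w + s *\<^sub>R v)"
  by (rule f_cong) (use assms in \<open>auto simp: axis_def\<close>)

lemma node_dir2_shift:
  assumes "(j, i) \<notin> G"
  shows "node_dir2 i v (z + t *\<^sub>R axis j 1)
    = node_dir2 i v z - (if j = i then t * dir2 (f i) v z / (\<sigma> i)\<^sup>2 else 0)"
proof -
  have "dir1 (f i) v (z + t *\<^sub>R axis j 1) = dir1 (f i) v z"
    "dir2 (f i) v (z + t *\<^sub>R axis j 1) = dir2 (f i) v z"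
    "f i (z + t *\<^sub>R axis j 1) = f i z"
    unfolding dir1_def dir2_def using f_shift_non_parent[OF assms, of z t]
    f_shift_non_parent[OF assms, of z t _ 0] by simp_all
  then show ?thesis
    unfolding node_dir2_def by (simp add: axis_def algebra_simps diff_divide_distrib add_divide_distrib)
qed

text \<open>Shifting the coordinate of \<open>i\<close> affects only the terms of \<open>i\<close> and of its children, and the
  latter do not depend on \<open>z\<close> at all once \<open>v\<close> vanishes on the parents of the children.\<close>

lemma dir2_energy_shift:
  assumes i: "i \<in> high_nodes k"
    and children: "\<And>c j. c \<in> high_nodes k \<Longrightarrow> (i, c) \<in> G \<Longrightarrow> (j, c) \<in> G \<Longrightarrow> v $ j = 0"
  shows "dir2 (energy k) v (z + axis i 1) = dir2 (energy k) v z - dir2 (f i) v z / (\<sigma> i)\<^sup>2"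
proof -
  have shift: "node_dir2 c v (z + 1 *\<^sub>R axis i 1)
      = node_dir2 c v z - (if c = i then dir2 (f i) v z / (\<sigma> i)\<^sup>2 else 0)" if "c \<in> high_nodes k" for c
  proof (cases "(i, c) \<in> G")
    case True
    then have "\<And>j. (j, c) \<in> G \<Longrightarrow> v $ j = 0" using children that by blast
    then have "node_dir2 c v w = (v $ c)\<^sup>2 / (\<sigma> c)\<^sup>2" for w by (rule node_dir2_if_parents_zero)
    moreover have "c \<noteq> i" using True not_self_loop by auto
    ultimately show ?thesis by simp
  next
    case False
    then show ?thesis using node_dir2_shift[OF False, of v z 1] by auto
  qed
  have "dir2 (energy k) v (z + axis i 1)
      = (\<Sum>c\<in>high_nodes k. node_dir2 c v z - (if c = i then dir2 (f i) v z / (\<sigma> i)\<^sup>2 else 0))"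
    unfolding dir2_energy using shift by simp
  also have "\<dots> = dir2 (energy k) v z - dir2 (f i) v z / (\<sigma> i)\<^sup>2"
    using i by (simp add: sum_subtractf dir2_energy)
  finally show ?thesis .
qed

lemma parents_zero_if_dir2_zero:
  assumes zero: "\<And>z. dir2 (f i) v z = 0" and "(j, i) \<in> G"
  shows "v $ j = 0"
proof -
  define w where "w = (\<chi> j. if (j, i) \<in> G then v $ j else 0)"
  have "f i (z + s *\<^sub>R v) = f i (z + s *\<^sub>R w)" for z s
    by (rule f_cong) (simp add: w_def)
  then have w_zero: "D2f i z w w = 0" for z
    using zero[of z] unfolding dir2_def by (simp flip: dir2_def add: dir2_f)
  have "w = 0"
  proof (rule ccontr)
    assume "w \<noteq> 0"
    define \<beta> where "\<beta> = (1 / norm w) *\<^sub>R w"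
    have "norm \<beta> = 1" using \<open>w \<noteq> 0\<close> by (simp add: \<beta>_def)
    moreover have "\<forall>j. j \<notin> parents G i \<longrightarrow> \<beta> $ j = 0" by (simp add: \<beta>_def w_def parents_def)
    moreover have "\<forall>z. dir2 (f i) \<beta> z = 0"
      by (simp add: dir2_f \<beta>_def blinfun.scaleR_right blinfun.scaleR_left w_zero)
    ultimately show False using nonlinear[of i] unfolding dir_nonlinear_def by blast
  qed
  then show ?thesis using \<open>(j, i) \<in> G\<close> by (auto simp: w_def vec_eq_iff) metis
qed

lemma low_directions_subset_const_dir2: "low_directions k \<subseteq> const_dir2_directions (energy k)"
proof
  fix v assume v: "v \<in> low_directions k"
  have "dir2 (energy k) v z = (\<Sum>i\<in>high_nodes k. (v $ i)\<^sup>2 / (\<sigma> i)\<^sup>2)" for z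
    unfolding dir2_energy
    by (intro sum.cong refl node_dir2_if_parents_zero) (use low_directions_parent[OF v] in blast)
  then show "v \<in> const_dir2_directions (energy k)" unfolding const_dir2_directions_def by blast
qed

text \<open>Conversely, along a direction of constant curvature the parents of every node of height at
  least \<open>k\<close> carry no weight. This is shown by induction on the height of the node, so that its
  children are already settled and \<open>dir2_energy_shift\<close> applies; the directional non-linearity of
  its mechanism then turns the vanishing curvature into vanishing weights.\<close>

lemma const_dir2_subset_low_directions: "const_dir2_directions (energy k) \<subseteq> low_directions k"
proof
  fix v assume "v \<in> const_dir2_directions (energy k)"
  then obtain c where c: "\<And>z. dir2 (energy k) v z = c" unfolding const_dir2_directions_def by blast
  have parents: "\<forall>i. node_height G i = l \<longrightarrow> k \<le> l \<longrightarrow> (\<forall>j. (j, i) \<in> G \<longrightarrow> v $ j = 0)" for l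
  proof (induction l rule: less_induct)
    case (less l)
    show ?case
    proof (intro allI impI)
      fix i j assume i: "node_height G i = l" "k \<le> l" and "(j, i) \<in> G"
      then have "i \<in> high_nodes k" by (simp add: high_nodes_def)
      moreover have "v $ j' = 0" if "c' \<in> high_nodes k" "(i, c') \<in> G" "(j', c') \<in> G" for c' j'
        using less.IH that node_height_less_parent[OF acyclic \<open>(i, c') \<in> G\<close>] i
        by (auto simp: high_nodes_def)
      ultimately have "dir2 (f i) v z = 0" for z
        using dir2_energy_shift[of i k v z] c sigma_pos[of i] by simp
      then show "v $ j = 0" using parents_zero_if_dir2_zero \<open>(j, i) \<in> G\<close> by blast
    qed
  qed
  show "v \<in> low_directions k" unfolding low_directions_def
  proof (intro CollectI allI impI)
    fix m assume "k < node_height G m"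
    then obtain l where l: "node_height G m = Suc l" "k \<le> l"
      by (metis Suc_le_eq less_imp_Suc_add le_add1 add_Suc)
    obtain c where "(m, c) \<in> G" "node_height G c = l" using child_of_node_height_Suc[OF acyclic l(1)] .
    then show "v $ m = 0" using parents l(2) by blast
  qed
qed

lemma const_dir2_directions_energy: "const_dir2_directions (energy k) = low_directions k"
  using const_dir2_subset_low_directions low_directions_subset_const_dir2 by blast

lemma emeasure_latent_nonzero:
  "emeasure (density lborel (\<lambda>z. ennreal (latent_density z))) UNIV \<noteq> 0"
proof
  have meas: "(\<lambda>z. ennreal (latent_density z)) \<in> borel_measurable lborel"
    using borel_measurable_ennreal_continuous[OF continuous_on_latent_density] by simp
  assume "emeasure (density lborel (\<lambda>z. ennreal (latent_density z))) UNIV = 0"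
  then have "AE z in lborel. ennreal (latent_density z) = 0"
    using meas by (simp add: emeasure_density nn_integral_0_iff_AE)
  then have "AE z::real^'n in lborel. False"
    by (rule AE_mp) (use latent_density_pos in \<open>auto intro!: AE_I2 simp: less_le\<close>)
  then have "ae_filter (lborel :: (real^'n) measure) = bot" using trivial_limit_def by blast
  then show False unfolding ae_filter_eq_bot_iff by simp
qed

end

section \<open>Two models with the same observational distribution\<close>

lemma borel_measurable_noise_measure:
  "g \<in> borel_measurable borel \<Longrightarrow> g \<in> borel_measurable (noise_measure \<sigma>)"
  unfolding noise_measure_def by (simp add: measurable_lborel2)

locale equivalent_models = M: sem_model H G f \<sigma> + M': sem_model H' G' f' \<sigma>'
  for H :: "real^'n::finite^'d::finite" and G f \<sigma> and H' :: "real^'n^'d" and G' f' \<sigma>' +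
  fixes L :: "real^'d^'n"
  assumes same_obs: "obs_dist H f \<sigma> = obs_dist H' f' \<sigma>'" and L: "L ** H = mat 1"
begin

text \<open>\<open>L\<close> recovers the latent vector of the first model from the observation, and \<open>A\<close> expresses
  it through the latent vector of the second.\<close>

definition A :: "real^'n^'n" where "A = L ** H'"

lemma distr_latent_eq:
  "density lborel (\<lambda>z. ennreal (M.latent_density z))
    = distr (density lborel (\<lambda>z. ennreal (M'.latent_density z))) borel (\<lambda>x. A *v x)"
proof -
  have meas: "(\<lambda>x. C *v x) \<in> borel_measurable borel" for C :: "real^'a::finite^'b::finite"
    by (intro borel_measurable_continuous_onI continuous_on_matrix_vector_mult)
  have meas_obs: "(\<lambda>e. C *v sem_solve g e) \<in> borel_measurable (noise_measure s)"
    if "continuous_on UNIV (sem_solve g)" for C :: "real^'n^'d" and g and s :: "'n \<Rightarrow> real"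
    by (intro borel_measurable_noise_measure borel_measurable_continuous_onI
        continuous_on_compose2[OF continuous_on_matrix_vector_mult that]) auto
  have "distr (obs_dist H f \<sigma>) borel (\<lambda>x. L *v x) = distr (noise_measure \<sigma>) borel (sem_solve f)"
    unfolding obs_dist_def
    using meas_obs[of f H \<sigma>, OF M.continuous_on_sem_solve] meas[of L]
    by (subst distr_distr) (simp_all add: o_def matrix_vector_mul_assoc L)
  also have "\<dots> = density lborel (\<lambda>z. ennreal (M.latent_density z))" by (rule M.distr_sem_solve)
  finally have "distr (obs_dist H f \<sigma>) borel (\<lambda>x. L *v x) = density lborel (\<lambda>z. ennreal (M.latent_density z))" .
  moreover have "distr (obs_dist H' f' \<sigma>') borel (\<lambda>x. L *v x)
      = distr (distr (noise_measure \<sigma>') borel (sem_solve f')) borel (\<lambda>x. A *v x)"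
    unfolding obs_dist_def
    using meas_obs[of f' H' \<sigma>', OF M'.continuous_on_sem_solve] meas[of L] meas[of A]
      borel_measurable_noise_measure[OF borel_measurable_continuous_onI[OF M'.continuous_on_sem_solve]]
    by (simp add: distr_distr o_def matrix_vector_mul_assoc A_def)
  ultimately show ?thesis using same_obs by (simp add: M'.distr_sem_solve)
qed

lemma invertible_A: "invertible A"
proof (rule invertible_if_distr_density)
  show "distr (density lborel (\<lambda>z. ennreal (M'.latent_density z))) borel (\<lambda>x. A *v x)
      = density lborel (\<lambda>z. ennreal (M.latent_density z))"
    by (rule distr_latent_eq[symmetric])
  show "(\<lambda>x. A *v x) \<in> borel_measurable (density lborel (\<lambda>z. ennreal (M'.latent_density z)))"
    by (simp add: measurable_lborel2 borel_measurable_continuous_onI continuous_on_matrix_vector_mult)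
  show "(\<lambda>z. ennreal (M.latent_density z)) \<in> borel_measurable lborel"
    using borel_measurable_ennreal_continuous[OF M.continuous_on_latent_density] by simp
  show "emeasure (density lborel (\<lambda>z. ennreal (M'.latent_density z)))
      (space (density lborel (\<lambda>z. ennreal (M'.latent_density z)))) \<noteq> 0"
    using M'.emeasure_latent_nonzero by simp
qed

definition B :: "real^'n^'n" where "B = matrix_inv A"

lemma AB: "A ** B = mat 1" and BA: "B ** A = mat 1"
  using invertible_A someI_ex[of "\<lambda>B. A ** B = mat 1 \<and> B ** A = mat 1"]
  unfolding B_def matrix_inv_def invertible_def by auto

lemma BA_vec [simp]: "B *v (A *v x) = x" and AB_vec [simp]: "A *v (B *v x) = x"
  by (simp_all add: matrix_vector_mul_assoc AB BA)

lemma det_B_nonzero: "det B \<noteq> 0"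
  using BA by (metis det_I det_mul mult_zero_left zero_neq_one)

lemma latent_density_eq: "M.latent_density z = M'.latent_density (B *v z) * \<bar>det B\<bar>"
proof -
  have jacobian: "distr lborel borel (\<lambda>x. B *v x) = density lborel (\<lambda>_. ennreal (1 / \<bar>det B\<bar>))"
    by (intro distr_lborel_const_jacobian[where S="\<lambda>x. A *v x" and T'="\<lambda>_ v. B *v v"]
        continuous_on_matrix_vector_mult
        bounded_linear_imp_has_derivative) (simp_all add: det_B_nonzero flip: linear_conv_bounded_linear)
  have "density lborel (\<lambda>z. ennreal (M.latent_density z))
      = density lborel (\<lambda>z. ennreal (M'.latent_density (B *v z)) * ennreal \<bar>det B\<bar>)"
    unfolding distr_latent_eq using det_B_nonzero
    by (intro distr_density_inverse_map[OF _ _ continuous_on_matrix_vector_mult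
          continuous_on_matrix_vector_mult jacobian _ borel_measurable_ennreal_continuous[OF M'.continuous_on_latent_density]]) simp_all
  also have "\<dots> = density lborel (\<lambda>z. ennreal (M'.latent_density (B *v z) * \<bar>det B\<bar>))"
    using M'.latent_density_pos by (simp add: ennreal_mult less_imp_le)
  finally show ?thesis
    using M.continuous_on_latent_density M'.continuous_on_latent_density
      M.latent_density_pos M'.latent_density_pos
    by (intro fun_cong[OF density_lborel_continuous_unique])
      (auto intro!: continuous_on_mult_right continuous_on_compose2[OF _ continuous_on_matrix_vector_mult]
        simp: less_imp_le)
qed

definition energy_offset :: real where
  "energy_offset = ln M.normalizer - ln M'.normalizer - ln \<bar>det B\<bar>"

lemma energy_0_eq: "M.energy 0 z = M'.energy 0 (B *v z) + energy_offset"
proof -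
  have "ln (M.normalizer * exp (- M.energy 0 z))
      = ln (M'.normalizer * exp (- M'.energy 0 (B *v z)) * \<bar>det B\<bar>)"
    using latent_density_eq[of z] by (simp add: M.latent_density_eq M'.latent_density_eq)
  then show ?thesis
    using M.normalizer_pos M'.normalizer_pos det_B_nonzero
    by (simp add: ln_mult energy_offset_def)
qed

lemma energy_eq: "M.energy k z = M'.energy k (B *v z) + energy_offset"
proof (induction k arbitrary: z)
  case 0
  show ?case by (rule energy_0_eq)
next
  case (Suc k)
  have low: "u \<in> M.low_directions k \<longleftrightarrow> B *v u \<in> M'.low_directions k" for u
    using const_dir2_directions_transfer[where F="M.energy k" and F'="M'.energy k", OF Suc.IH BA]
    by (simp add: M.const_dir2_directions_energy M'.const_dir2_directions_energy)
  show ?case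
  proof (rule antisym)
    obtain u' where u': "u' \<in> M'.low_directions k" "M'.energy k (B *v z + u') = M'.energy (Suc k) (B *v z)"
      using M'.energy_Suc_attained by blast
    have "M.energy (Suc k) z \<le> M.energy k (z + A *v u')"
      using low u'(1) by (intro M.energy_Suc_le) simp
    also have "\<dots> = M'.energy (Suc k) (B *v z) + energy_offset"
      using Suc.IH u'(2) by (simp add: matrix_vector_right_distrib)
    finally show "M.energy (Suc k) z \<le> M'.energy (Suc k) (B *v z) + energy_offset" .
  next
    obtain u where u: "u \<in> M.low_directions k" "M.energy k (z + u) = M.energy (Suc k) z"
      using M.energy_Suc_attained by blast
    have "M'.energy (Suc k) (B *v z) \<le> M'.energy k (B *v z + B *v u)"
      using low u(1) by (intro M'.energy_Suc_le) simp
    also have "\<dots> = M.energy (Suc k) z - energy_offset"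
      using Suc.IH[of "z + u"] u(2) by (simp add: matrix_vector_right_distrib)
    finally show "M'.energy (Suc k) (B *v z) + energy_offset \<le> M.energy (Suc k) z" by simp
  qed
qed

lemma low_directions_eq: "u \<in> M.low_directions k \<longleftrightarrow> B *v u \<in> M'.low_directions k"
  using const_dir2_directions_transfer[where F="M.energy k" and F'="M'.energy k", OF energy_eq BA]
  by (simp add: M.const_dir2_directions_energy M'.const_dir2_directions_energy)

lemma matrix_vector_mult_axis_nth: "(C *v axis j 1) $ m = (C :: real^'a::finite^'b::finite) $ m $ j"
  by (simp add: matrix_vector_mult_basis column_def)

lemma A_support:
  assumes "A $ m $ j \<noteq> 0"
  shows "node_height G m \<le> node_height G' j"
proof (rule ccontr)
  assume "\<not> node_height G m \<le> node_height G' j"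
  moreover have "A *v axis j 1 \<in> M.low_directions (node_height G' j)"
    using low_directions_eq M'.axis_low_directions by simp
  ultimately have "A $ m $ j = 0"
    unfolding M.low_directions_def by (auto simp: matrix_vector_mult_axis_nth)
  with assms show False ..
qed

lemma B_support:
  assumes "B $ j $ m \<noteq> 0"
  shows "node_height G' j \<le> node_height G m"
proof (rule ccontr)
  assume "\<not> node_height G' j \<le> node_height G m"
  moreover have "B *v axis m 1 \<in> M'.low_directions (node_height G m)"
    using low_directions_eq M.axis_low_directions by blast
  ultimately have "B $ j $ m = 0"
    unfolding M'.low_directions_def by (auto simp: matrix_vector_mult_axis_nth)
  with assms show False ..
qed

lemma A_factorization:
  obtains \<pi> C where "\<pi> permutes UNIV" "\<And>i. C $ i $ i \<noteq> 0"
    "\<And>i j. node_height G' j < node_height G' i \<Longrightarrow> C $ i $ j = 0" "perm_matrix \<pi> ** C = A"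
proof -
  obtain s where s: "s permutes UNIV" "\<And>j. A $ s j $ j \<noteq> 0"
    "\<And>j. node_height G (s j) = node_height G' j"
    using permutation_matching_ranks[where r="node_height G" and r'="node_height G'", OF AB A_support B_support] by blast
  define C where "C = (\<chi> i j. A $ s i $ j)"
  have "perm_matrix (inv s) ** C = A"
    using s(1) by (simp add: perm_matrix_mult C_def permutes_inverses(1))
  moreover have "C $ i $ j = 0" if "node_height G' j < node_height G' i" for i j
    using A_support[of "s i" j] s(3)[of i] that by (auto simp: C_def)
  moreover have "C $ i $ i \<noteq> 0" for i using s(2) by (simp add: C_def)
  ultimately show ?thesis using that permutes_inv[OF s(1)] by blast
qed

end

section \<open>Identifiability\<close>

definition representative :: "(real^'d) measure
    \<Rightarrow> (real^'n^'d) \<times> ('n \<times> 'n) set \<times> ('n \<Rightarrow> real^'n \<Rightarrow> real) \<times> ('n \<Rightarrow> real)" where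
  "representative p = (SOME (H, G, f, \<sigma>). valid_model H G f \<sigma> \<and> obs_dist H f \<sigma> = p)"

lemma representative:
  fixes H H0 :: "real^'n::finite^'d::finite"
  assumes "valid_model H G f \<sigma>" and "representative (obs_dist H f \<sigma>) = (H0, G0, f0, \<sigma>0)"
  shows "valid_model H0 G0 f0 \<sigma>0 \<and> obs_dist H0 f0 \<sigma>0 = obs_dist H f \<sigma>"
proof -
  let ?P = "\<lambda>(H0 :: real^'n^'d, G0, f0, \<sigma>0). valid_model H0 G0 f0 \<sigma>0 \<and> obs_dist H0 f0 \<sigma>0 = obs_dist H f \<sigma>"
  have "?P (H, G, f, \<sigma>)" using assms(1) by simp
  then have "?P (Eps ?P)" by (rule someI[where P="?P"])
  then show ?thesis using assms(2) unfolding representative_def by simp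
qed

definition left_inverse :: "real^'n::finite^'d::finite \<Rightarrow> real^'d^'n" where
  "left_inverse H = (SOME L. L ** H = mat 1)"

lemma left_inverse:
  fixes H :: "real^'n::finite^'d::finite"
  assumes "rank H = CARD('n)"
  shows "left_inverse H ** H = mat 1"
proof -
  have "\<exists>L. L ** H = mat 1"
    using assms matrix_nonfull_linear_equations_eq[of H] matrix_left_invertible_ker[of H] by metis
  then show ?thesis unfolding left_inverse_def by (rule someI_ex)
qed

lemma equivalent_models_representative:
  fixes H :: "real^'n::finite^'d::finite"
  assumes "valid_model H' G' f' \<sigma>'" and "representative (obs_dist H' f' \<sigma>') = (H, G, f, \<sigma>)"
  shows "equivalent_models H G f \<sigma> H' G' f' \<sigma>' (left_inverse H)"
proof -
  have "valid_model H G f \<sigma>" "obs_dist H f \<sigma> = obs_dist H' f' \<sigma>'"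
    using representative[OF assms] by auto
  then show ?thesis
    using assms(1) left_inverse[of H] by unfold_locales (auto simp: valid_model_def)
qed

text \<open>The estimator inverts the mixing matrix of an arbitrary valid model that generates the given
  distribution.\<close>

definition unmixing :: "(real^'d) measure \<Rightarrow> real^'d \<Rightarrow> real^'n" where
  "unmixing p x = left_inverse (fst (representative p)) *v x"

theorem theorem1:
  shows "\<exists>\<Phi> :: (real^'d) measure \<Rightarrow> real^'d \<Rightarrow> real^'n::finite.
    \<forall>(H :: real^'n^'d) G f \<sigma>. valid_model H G f \<sigma> \<longrightarrow>
      (\<exists>\<pi> (C :: real^'n^'n).
         \<pi> permutes (UNIV :: 'n set) \<and>
         (\<forall>i. C $ i $ i \<noteq> 0) \<and>
         (\<forall>k i j. i \<in> layer G k \<and> j \<in> (\<Union>l<k. layer G l) \<longrightarrow> C $ i $ j = 0) \<and>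
         (\<forall>z. \<Phi> (obs_dist H f \<sigma>) (H *v z) = (perm_matrix \<pi> ** C) *v z))"
proof (intro exI[of _ unmixing] allI impI)
  fix H' :: "real^'n^'d" and G' f' \<sigma>'
  assume valid': "valid_model H' G' f' \<sigma>'"
  obtain H :: "real^'n^'d" and G f \<sigma> where rep: "representative (obs_dist H' f' \<sigma>') = (H, G, f, \<sigma>)"
    by (metis prod_cases4)
  interpret equivalent_models H G f \<sigma> H' G' f' \<sigma>' "left_inverse H"
    using equivalent_models_representative[OF valid' rep] .
  have unmix: "unmixing (obs_dist H' f' \<sigma>') (H' *v z) = A *v z" for z
    by (simp add: unmixing_def rep A_def matrix_vector_mul_assoc)
  show "\<exists>\<pi> C. \<pi> permutes UNIV \<and> (\<forall>i. C $ i $ i \<noteq> 0) \<and>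
      (\<forall>k i j. i \<in> layer G' k \<and> j \<in> (\<Union>l<k. layer G' l) \<longrightarrow> C $ i $ j = 0) \<and>
      (\<forall>z. unmixing (obs_dist H' f' \<sigma>') (H' *v z) = (perm_matrix \<pi> ** C) *v z)"
  proof (rule A_factorization)
    fix \<pi> C assume \<pi>C: "\<pi> permutes UNIV" "\<And>i. C $ i $ i \<noteq> 0"
      "\<And>i j. node_height G' j < node_height G' i \<Longrightarrow> C $ i $ j = 0" "perm_matrix \<pi> ** C = A"
    have "\<forall>k i j. i \<in> layer G' k \<and> j \<in> (\<Union>l<k. layer G' l) \<longrightarrow> C $ i $ j = 0"
      using \<pi>C(3) by (auto simp: layer_iff_node_height[OF M'.acyclic])
    then show ?thesis using \<pi>C(1,2,4) unmix by (intro exI[of _ \<pi>] exI[of _ C]) simp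
  qed
qed

end
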